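(* Let $\alpha\in\mathbb{R}\setminus\mathbb{Q}$ and $\tilde v\in C^0(\mathbb{T},\mathbb{C})$, and let $S^{\tilde v}(x)=\begin{pmatrix}\tilde v(x)&-1\\1&0\end{pmatrix}$. Assume that $|\operatorname{Re}\tilde v(x)|\le l$ and $\epsilon\le\operatorname{Im}\tilde v(x)\le l$ for all $x\in\mathbb{T}$, where $l\ge \epsilon>0$. Then $L(\alpha,S^{\tilde v})\ge C(l)\,\epsilon$, where $C(l)>0$ is a constant depending only on $l$.
   Context: $\mathbb{T}=\mathbb{R}/\mathbb{Z}$. For a continuous $A:\mathbb{T}\to SL(2,\mathbb{C})$ the Lyapunov exponent of the quasiperiodic cocycle $(\alpha,A)$ is $L(\alpha,A)=\lim_{n\to\infty}\frac1n\int_{\mathbb T}\ln\|A(x+(n-1)\alpha)\cdots A(x)\|\,dx$. *)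

theory Defs
  imports "HOL-Analysis.Analysis"
begin

definition mat_norm :: "complex^2^2 \<Rightarrow> real" where
  "mat_norm A = onorm (\<lambda>v. A *v v)"

definition schr_mat :: "(real \<Rightarrow> complex) \<Rightarrow> real \<Rightarrow> complex^2^2" where
  "schr_mat v x = (\<chi> i j. if i = 1 then (if j = 1 then v x else -1)
                           else (if j = 1 then 1 else 0))"

text \<open>n-step cocycle A(x+(n-1)a) ... A(x); functions on T = R/Z are 1-periodic functions on R.\<close>
fun cocycle_iter :: "real \<Rightarrow> (real \<Rightarrow> complex^2^2) \<Rightarrow> nat \<Rightarrow> real \<Rightarrow> complex^2^2" where
  "cocycle_iter a A 0 x = mat 1"
| "cocycle_iter a A (Suc n) x = A (x + real n * a) ** cocycle_iter a A n x"

definition lyap_exp :: "real \<Rightarrow> (real \<Rightarrow> complex^2^2) \<Rightarrow> real" where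
  "lyap_exp a A = lim (\<lambda>n. (1 / real n) * integral {0..1} (\<lambda>x. ln (mat_norm (cocycle_iter a A n x))))"

end

theory Submission
  imports Defs "HOL-Library.Periodic_Fun"
begin

text \<open>
  Follow the vector (i, 1) along the cocycle: its image under the first n matrices is
  (z_0 ... z_(n-1)) (z_n, 1), where z_k is the orbit of i under the Moebius maps
  z |-> v_k - 1/z, v_k = v(x + k alpha). The heights y_k = Im z_k satisfy
  y_(k+1) = Im v_k + y_k / |z_k|^2, whence 2 ln |z_k| >= ln y_k - ln y_(k+1) + eps / y_(k+1).
  The first two terms telescope against the bound y_k <= l + 1 + 1/eps, and since
  y_(k+1) <= l + 1/y_k, of any two consecutive heights one is at most l + 1. Hence
  ln |A_n(x)| >= n eps / (4 (l + 1)) - K uniformly in x. The integrals of ln |A_n| are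
  subadditive, so by Fekete's lemma the limit defining the Lyapunov exponent exists and
  inherits the linear lower bound.
\<close>

lemma bounded_linear_matrix_vector_mult: "bounded_linear (\<lambda>w. (B::complex^2^2) *v w)"
  using matrix_vector_mul_bounded_linear[of B] by simp

lemma mat_norm_mult: "mat_norm (B ** C) \<le> mat_norm B * mat_norm C"
  using onorm_compose[OF bounded_linear_matrix_vector_mult bounded_linear_matrix_vector_mult]
  by (simp add: mat_norm_def o_def matrix_vector_mul_assoc)

lemma norm_matrix_vector_mult_le: "norm (B *v w) \<le> mat_norm B * norm w"
  unfolding mat_norm_def using onorm[OF bounded_linear_matrix_vector_mult] by blast

lemma mat_norm_nonneg: "0 \<le> mat_norm B"
  unfolding mat_norm_def by (rule onorm_pos_le[OF bounded_linear_matrix_vector_mult])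

lemma mat_norm_le_entry_sum: "mat_norm B \<le> (\<Sum>i\<in>UNIV. \<Sum>j\<in>UNIV. norm (B $ i $ j))"
  unfolding mat_norm_def
proof (rule onorm_le)
  fix w :: "complex^2"
  have "norm (B *v w) \<le> (\<Sum>i\<in>UNIV. norm ((B *v w) $ i))"
    using L2_set_le_sum[of UNIV "\<lambda>i. norm ((B *v w) $ i)"] by (simp add: norm_vec_def)
  also have "\<dots> \<le> (\<Sum>i\<in>UNIV. \<Sum>j\<in>UNIV. norm (B $ i $ j) * norm w)"
  proof (rule sum_mono)
    fix i
    have "norm ((B *v w) $ i) \<le> (\<Sum>j\<in>UNIV. norm (B $ i $ j * w $ j))"
      unfolding matrix_vector_mult_def by (simp add: norm_sum)
    also have "\<dots> \<le> (\<Sum>j\<in>UNIV. norm (B $ i $ j) * norm w)"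
      by (intro sum_mono) (simp add: norm_mult mult_left_mono Finite_Cartesian_Product.norm_nth_le)
    finally show "norm ((B *v w) $ i) \<le> (\<Sum>j\<in>UNIV. norm (B $ i $ j) * norm w)" .
  qed
  finally show "norm (B *v w) \<le> (\<Sum>i\<in>UNIV. \<Sum>j\<in>UNIV. norm (B $ i $ j)) * norm w"
    by (simp add: sum_distrib_right)
qed

lemma mat_norm_le_norm: "mat_norm B \<le> 4 * norm B"
proof -
  have "norm (B $ i $ j) \<le> norm B" for i j
    by (meson Finite_Cartesian_Product.norm_nth_le order_trans)
  then have "(\<Sum>i\<in>UNIV. \<Sum>j\<in>UNIV. norm (B $ i $ j))
             \<le> (\<Sum>i\<in>(UNIV::2 set). \<Sum>j\<in>(UNIV::2 set). norm B)"
    by (intro sum_mono)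
  then show ?thesis using mat_norm_le_entry_sum[of B] by simp
qed

lemma mat_norm_lipschitz: "4-lipschitz_on S mat_norm"
proof (rule lipschitz_onI)
  have "mat_norm B \<le> mat_norm C + 4 * norm (B - C)" for B C
  proof -
    have "mat_norm B = onorm (\<lambda>w. (B - C) *v w + C *v w)"
      unfolding mat_norm_def by (simp add: matrix_vector_mult_diff_rdistrib)
    also have "\<dots> \<le> mat_norm (B - C) + mat_norm C"
      unfolding mat_norm_def
      by (rule onorm_triangle[OF bounded_linear_matrix_vector_mult bounded_linear_matrix_vector_mult])
    finally show ?thesis using mat_norm_le_norm[of "B - C"] by linarith
  qed
  then show "dist (mat_norm B) (mat_norm C) \<le> 4 * dist B C" for B C
    by (smt (verit) dist_norm dist_real_def norm_minus_commute)
qed simp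

lemma continuous_on_mat_norm: "continuous_on S mat_norm"
  using mat_norm_lipschitz by (rule lipschitz_on_continuous_on)

lemma cocycle_iter_add:
  "cocycle_iter a A (n + m) x = cocycle_iter a A m (x + real n * a) ** cocycle_iter a A n x"
proof (induction m)
  case 0
  then show ?case by (simp add: matrix_mul_lid)
next
  case (Suc m)
  have "cocycle_iter a A (n + Suc m) x
        = A (x + real n * a + real m * a) ** (cocycle_iter a A m (x + real n * a) ** cocycle_iter a A n x)"
    using Suc by (simp add: algebra_simps)
  then show ?case by (simp add: matrix_mul_assoc)
qed

lemma cocycle_iter_periodic:
  assumes "\<And>x. A (x + 1) = A x"
  shows "cocycle_iter a A n (x + 1) = cocycle_iter a A n x"
proof (induction n)
  case (Suc n)
  then show ?case using assms[of "x + real n * a"] by (simp add: algebra_simps)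
qed simp

lemma continuous_on_matrix_mult [continuous_intros]:
  fixes f g :: "'a::topological_space \<Rightarrow> 'b::real_normed_algebra_1^'n^'n"
  assumes "continuous_on S f" "continuous_on S g"
  shows "continuous_on S (\<lambda>x. f x ** g x)"
  unfolding matrix_matrix_mult_def by (intro continuous_on_vec_lambda continuous_intros assms)

lemma continuous_on_cocycle_iter:
  assumes "continuous_on UNIV A"
  shows "continuous_on UNIV (cocycle_iter a A n)"
proof (induction n)
  case (Suc n)
  have "continuous_on UNIV (\<lambda>x. A (x + real n * a))"
    by (intro continuous_on_compose2[OF assms] continuous_intros) auto
  with Suc show ?case by (simp add: continuous_on_matrix_mult)
qed simp

lemma continuous_on_schr_mat:
  assumes "continuous_on UNIV v"
  shows "continuous_on UNIV (schr_mat v)"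
proof -
  have "continuous_on UNIV (\<lambda>x. if i = 1 then if j = 1 then v x else -1 else if j = 1 then 1 else 0)"
    for i j :: 2
    using assms by (cases "i = 1"; cases "j = 1") auto
  then show ?thesis
    unfolding schr_mat_def[abs_def] by (intro continuous_on_vec_lambda)
qed

lemma schr_mat_periodic:
  assumes "\<And>x. v (x + 1) = v x"
  shows "schr_mat v (x + 1) = schr_mat v x"
  using assms by (simp add: schr_mat_def vec_eq_iff)

lemma integral_periodic_shift:
  fixes g :: "real \<Rightarrow> 'a::euclidean_space"
  assumes cont: "continuous_on UNIV g" and per: "\<And>x. g (x + 1) = g x"
  shows "integral {0..1} (\<lambda>x. g (x + c)) = integral {0..1} g"
proof -
  interpret periodic_fun_simple' g by unfold_locales (rule per)
  define r where "r = frac c"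
  have r: "0 \<le> r" "r \<le> 1" using frac_lt_1[of c] by (auto simp: r_def)
  have shift: "g (x + c) = g (r + x)" for x
    using plus_of_int[of "r + x" "\<lfloor>c\<rfloor>"] by (simp add: r_def frac_def algebra_simps)
  have int: "g integrable_on {s..t}" for s t
    by (rule integrable_continuous_real) (rule continuous_on_subset[OF cont], simp)
  have "integral {0..1} (\<lambda>x. g (x + c)) = integral {r..1 + r} g"
    using integral_shift_Icc_real[of 0 1 g r] by (simp add: shift o_def)
  also have "\<dots> = integral {r..1} g + integral {1..1 + r} g"
    using Henstock_Kurzweil_Integration.integral_combine[where a = r and c = 1 and b = "1 + r" and f = g]
      int r by simp
  also have "integral {1..1 + r} g = integral {0..r} g"
    using integral_shift_Icc_real[of 0 r g 1] by (simp add: o_def add.commute per)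
  also have "integral {r..1} g + integral {0..r} g = integral {0..1} g"
    using Henstock_Kurzweil_Integration.integral_combine[where a = 0 and c = r and b = 1 and f = g]
      int r by (simp add: add.commute)
  finally show ?thesis .
qed

lemma subadditive_mult_add_le:
  fixes a :: "nat \<Rightarrow> real"
  assumes sub: "\<And>n m. a (n + m) \<le> a n + a m"
  shows "a (q * k + r) \<le> real q * a k + a r"
proof (induction q)
  case (Suc q)
  have "a (Suc q * k + r) \<le> a k + a (q * k + r)"
    using sub[of k "q * k + r"] by (simp add: add.assoc)
  with Suc show ?case by (simp add: algebra_simps)
qed simp

lemma subadditive_Fekete:
  fixes a :: "nat \<Rightarrow> real"
  assumes sub: "\<And>n m. a (n + m) \<le> a n + a m"
    and bdd: "bdd_below ((\<lambda>n. a n / real n) ` {1..})"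
  shows "(\<lambda>n. a n / real n) \<longlonglongrightarrow> Inf ((\<lambda>n. a n / real n) ` {1..})"
proof -
  define L where "L = Inf ((\<lambda>n. a n / real n) ` {1..})"
  have L_le: "L \<le> a n / real n" if "n \<ge> 1" for n
    unfolding L_def using bdd that by (auto intro!: cInf_lower)
  have "eventually (\<lambda>n. y < a n / real n) sequentially" if "y < L" for y
    using eventually_ge_at_top[of 1] by eventually_elim (use L_le that in fastforce)
  moreover have "eventually (\<lambda>n. a n / real n < y) sequentially" if "L < y" for y
  proof -
    obtain k where k: "k \<ge> 1" "a k / real k < y"
      using cInf_lessD[of "(\<lambda>n. a n / real n) ` {1..}" y] \<open>L < y\<close> by (auto simp: L_def)
    define E where "E = \<bar>a k\<bar> + (\<Sum>j<k. \<bar>a j\<bar>)"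
    have bound: "a n / real n \<le> a k / real k + E / real n" if "n \<ge> 1" for n
    proof -
      define q r where "q = n div k" and "r = n mod k"
      have n: "n = q * k + r" and "r < k" using k by (auto simp: q_def r_def)
      have "a r \<le> (\<Sum>j<k. \<bar>a j\<bar>)"
        using member_le_sum[of r "{..<k}" "\<lambda>j. \<bar>a j\<bar>"] \<open>r < k\<close> by simp
      moreover have "\<bar>real r * (a k / real k)\<bar> \<le> \<bar>a k\<bar>"
        using \<open>r < k\<close> mult_right_mono[of "real r / real k" 1 "\<bar>a k\<bar>"] by (simp add: abs_mult)
      moreover have "real q * a k = real n * (a k / real k) - real r * (a k / real k)"
        using k by (simp add: n field_simps)
      ultimately have "a n \<le> real n * (a k / real k) + E"
        using subadditive_mult_add_le[of a, OF sub, of q k r] abs_ge_minus_self[of "real r * (a k / real k)"]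
        unfolding E_def n by linarith
      then show ?thesis using that by (simp add: field_simps)
    qed
    have "(\<lambda>n. a k / real k + E / real n) \<longlonglongrightarrow> a k / real k + 0"
      by (intro tendsto_intros lim_const_over_n)
    then have "eventually (\<lambda>n. a k / real k + E / real n < y) sequentially"
      using k by (intro order_tendstoD) auto
    then show ?thesis
      using eventually_ge_at_top[of 1] by eventually_elim (use bound in fastforce)
  qed
  ultimately show ?thesis unfolding L_def[symmetric] by (rule order_tendstoI)
qed

definition cocycle_log_norm_integral :: "real \<Rightarrow> (real \<Rightarrow> complex^2^2) \<Rightarrow> nat \<Rightarrow> real" where
  "cocycle_log_norm_integral a A n = integral {0..1} (\<lambda>x. ln (mat_norm (cocycle_iter a A n x)))"

lemma continuous_on_ln_mat_norm_cocycle_iter: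
  assumes "continuous_on UNIV A" and "\<And>x. 0 < mat_norm (cocycle_iter a A n x)"
  shows "continuous_on UNIV (\<lambda>x. ln (mat_norm (cocycle_iter a A n x)))"
proof (rule continuous_on_ln)
  show "continuous_on UNIV (\<lambda>x. mat_norm (cocycle_iter a A n x))"
    by (rule continuous_on_compose2[OF continuous_on_mat_norm continuous_on_cocycle_iter[OF assms(1)]])
      auto
qed (metis assms(2) less_irrefl)

lemma cocycle_log_norm_integral_subadditive:
  assumes cont: "continuous_on UNIV A" and per: "\<And>x. A (x + 1) = A x"
    and pos: "\<And>n x. 0 < mat_norm (cocycle_iter a A n x)"
  shows "cocycle_log_norm_integral a A (n + m)
         \<le> cocycle_log_norm_integral a A n + cocycle_log_norm_integral a A m"
proof -
  define f where "f n x = ln (mat_norm (cocycle_iter a A n x))" for n x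
  have f_cont: "continuous_on UNIV (f k)" for k
    unfolding f_def[abs_def] using cont pos by (rule continuous_on_ln_mat_norm_cocycle_iter)
  have f_shift_cont: "continuous_on UNIV (\<lambda>x. f m (x + real n * a))"
    by (rule continuous_on_compose2[OF f_cont]) (auto intro: continuous_intros)
  have integrable: "g integrable_on {0..1}" if "continuous_on UNIV g" for g :: "real \<Rightarrow> real"
    by (rule integrable_continuous_real) (rule continuous_on_subset[OF that], simp)
  have "f (n + m) x \<le> f m (x + real n * a) + f n x" for x
  proof -
    have "mat_norm (cocycle_iter a A (n + m) x)
          \<le> mat_norm (cocycle_iter a A m (x + real n * a)) * mat_norm (cocycle_iter a A n x)"
      unfolding cocycle_iter_add by (rule mat_norm_mult)
    then have "f (n + m) x
               \<le> ln (mat_norm (cocycle_iter a A m (x + real n * a)) * mat_norm (cocycle_iter a A n x))"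
      unfolding f_def using pos by (subst ln_le_cancel_iff) auto
    then show ?thesis
      unfolding f_def using pos by (simp add: ln_mult_pos)
  qed
  then have "integral {0..1} (f (n + m))
             \<le> integral {0..1} (\<lambda>x. f m (x + real n * a)) + integral {0..1} (f n)"
    using integrable[OF f_cont] integrable[OF f_shift_cont]
    by (simp add: Henstock_Kurzweil_Integration.integral_le integrable_add
        flip: Henstock_Kurzweil_Integration.integral_add)
  also have "integral {0..1} (\<lambda>x. f m (x + real n * a)) = integral {0..1} (f m)"
    using f_cont by (rule integral_periodic_shift) (simp add: f_def cocycle_iter_periodic per)
  finally show ?thesis
    by (simp add: cocycle_log_norm_integral_def f_def[abs_def])
qed

lemma cocycle_log_norm_integral_tendsto_lyap_exp:
  assumes cont: "continuous_on UNIV A" and per: "\<And>x. A (x + 1) = A x"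
    and pos: "\<And>n x. 0 < mat_norm (cocycle_iter a A n x)"
    and bdd: "bdd_below ((\<lambda>n. cocycle_log_norm_integral a A n / real n) ` {1..})"
  shows "(\<lambda>n. cocycle_log_norm_integral a A n / real n) \<longlonglongrightarrow> lyap_exp a A"
proof -
  have "convergent (\<lambda>n. cocycle_log_norm_integral a A n / real n)"
    using subadditive_Fekete[OF cocycle_log_norm_integral_subadditive[OF cont per pos] bdd]
    unfolding convergent_def by blast
  then show ?thesis
    by (simp add: convergent_LIMSEQ_iff lyap_exp_def cocycle_log_norm_integral_def)
qed

lemma lyap_exp_ge:
  assumes cont: "continuous_on UNIV A" and per: "\<And>x. A (x + 1) = A x"
    and pos: "\<And>n x. 0 < mat_norm (cocycle_iter a A n x)"
    and lower: "\<And>n x. c * real n - K \<le> ln (mat_norm (cocycle_iter a A n x))"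
  shows "c \<le> lyap_exp a A"
proof -
  define I where "I = cocycle_log_norm_integral a A"
  have I_lower: "c * real n - K \<le> I n" for n
  proof -
    have "integral {0..1} (\<lambda>_::real. c * real n - K) \<le> I n"
      unfolding I_def cocycle_log_norm_integral_def
    proof (rule Henstock_Kurzweil_Integration.integral_le)
      show "(\<lambda>x. ln (mat_norm (cocycle_iter a A n x))) integrable_on {0..1}"
        by (intro integrable_continuous_real
            continuous_on_subset[OF continuous_on_ln_mat_norm_cocycle_iter[OF cont pos]]) auto
    qed (use lower in auto)
    then show ?thesis by simp
  qed
  have I_div_lower: "c - K / real n \<le> I n / real n" if "n \<ge> 1" for n
  proof -
    have "c - K / real n = (c * real n - K) / real n" using that by (simp add: field_simps)
    also have "\<dots> \<le> I n / real n" using I_lower[of n] by (simp add: divide_right_mono)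
    finally show ?thesis .
  qed
  have "bdd_below ((\<lambda>n. I n / real n) ` {1..})"
  proof (rule bdd_belowI2)
    fix n :: nat assume "n \<in> {1..}"
    then have "\<bar>K / real n\<bar> \<le> \<bar>K\<bar>"
      using mult_left_mono[of 1 "real n" "\<bar>K\<bar>"] by (simp add: abs_div divide_le_eq)
    moreover have "c - K / real n \<le> I n / real n" using I_div_lower \<open>n \<in> {1..}\<close> by simp
    ultimately show "c - \<bar>K\<bar> \<le> I n / real n" using abs_ge_self[of "K / real n"] by linarith
  qed
  then have "(\<lambda>n. I n / real n) \<longlonglongrightarrow> lyap_exp a A"
    unfolding I_def by (rule cocycle_log_norm_integral_tendsto_lyap_exp[OF cont per pos])
  moreover have "(\<lambda>n. c - K / real n) \<longlonglongrightarrow> c - 0"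
    by (intro tendsto_intros lim_const_over_n)
  ultimately show ?thesis
    using I_div_lower by (intro LIMSEQ_le[of "\<lambda>n. c - K / real n" _ "\<lambda>n. I n / real n"])
      (auto intro: exI[of _ 1])
qed

fun schr_orbit :: "(nat \<Rightarrow> complex) \<Rightarrow> nat \<Rightarrow> complex" where
  "schr_orbit s 0 = \<i>"
| "schr_orbit s (Suc k) = s k - 1 / schr_orbit s k"

lemma Im_schr_orbit_Suc:
  "Im (schr_orbit s (Suc k)) = Im (s k) + Im (schr_orbit s k) / (cmod (schr_orbit s k))\<^sup>2"
  by (simp add: Im_divide cmod_power2)

lemma Im_schr_orbit_pos:
  assumes "\<And>k. 0 \<le> Im (s k)"
  shows "0 < Im (schr_orbit s k)"
proof (induction k)
  case (Suc k)
  then have "0 < Im (schr_orbit s k) / (cmod (schr_orbit s k))\<^sup>2"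
    by (auto intro!: divide_pos_pos)
  then show ?case using Im_schr_orbit_Suc[of s k] assms[of k] by linarith
qed simp

lemma schr_orbit_nonzero:
  assumes "\<And>k. 0 \<le> Im (s k)"
  shows "schr_orbit s k \<noteq> 0"
  using Im_schr_orbit_pos[of s k] assms by fastforce

lemma Im_schr_orbit_Suc_le:
  assumes "\<And>k. 0 \<le> Im (s k)"
  shows "Im (schr_orbit s (Suc k)) \<le> Im (s k) + 1 / Im (schr_orbit s k)"
proof -
  define y where "y = Im (schr_orbit s k)"
  have "0 < y" using Im_schr_orbit_pos[OF assms] by (simp add: y_def)
  moreover have "y\<^sup>2 \<le> (cmod (schr_orbit s k))\<^sup>2"
    unfolding y_def by (metis abs_Im_le_cmod abs_ge_zero power2_abs power_mono)
  ultimately have "y / (cmod (schr_orbit s k))\<^sup>2 \<le> y / y\<^sup>2"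
    by (intro divide_left_mono) (auto intro!: mult_pos_pos)
  also have "\<dots> = 1 / y" by (simp add: power2_eq_square)
  finally show ?thesis using Im_schr_orbit_Suc[of s k] by (simp add: y_def)
qed

lemma Im_schr_orbit_le:
  assumes "0 < \<epsilon>" and Im_s: "\<And>k. \<epsilon> \<le> Im (s k) \<and> Im (s k) \<le> l"
  shows "Im (schr_orbit s k) \<le> l + 1 + 1 / \<epsilon>"
proof (cases k)
  case 0
  have "0 \<le> l" using assms Im_s[of 0] by linarith
  with 0 \<open>0 < \<epsilon>\<close> show ?thesis by simp
next
  case (Suc j)
  have nonneg: "\<And>k. 0 \<le> Im (s k)" using assms by (meson order.trans less_imp_le)
  have "min 1 \<epsilon> \<le> Im (schr_orbit s j)"
  proof (cases j)
    case (Suc i)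
    have "0 \<le> Im (schr_orbit s i) / (cmod (schr_orbit s i))\<^sup>2"
      using Im_schr_orbit_pos[of s i, OF nonneg] by simp
    then show ?thesis using Im_schr_orbit_Suc[of s i] Im_s[of i] Suc by (simp add: min_le_iff_disj)
  qed simp
  then have "1 / Im (schr_orbit s j) \<le> 1 / min 1 \<epsilon>"
    using \<open>0 < \<epsilon>\<close> by (intro divide_left_mono) auto
  also have "\<dots> \<le> 1 + 1 / \<epsilon>"
    using \<open>0 < \<epsilon>\<close> by (cases "\<epsilon> \<le> 1") auto
  finally have "1 / Im (schr_orbit s j) \<le> 1 + 1 / \<epsilon>" .
  then show ?thesis
    unfolding Suc using Im_schr_orbit_Suc_le[of s j, OF nonneg] Im_s[of j] by linarith
qed

lemma ln_cmod_schr_orbit_ge: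
  assumes nonneg: "\<And>k. 0 \<le> Im (s k)"
  defines "y \<equiv> \<lambda>k. Im (schr_orbit s k)"
  shows "ln (y k) - ln (y (Suc k)) + Im (s k) / y (Suc k) \<le> 2 * ln (cmod (schr_orbit s k))"
proof -
  define d where "d = y (Suc k) - Im (s k)"
  have y_pos: "0 < y j" for j using Im_schr_orbit_pos[OF nonneg] by (simp add: y_def)
  have d_eq: "d = y k / (cmod (schr_orbit s k))\<^sup>2"
    using Im_schr_orbit_Suc[of s k] by (simp add: d_def y_def)
  then have "0 < d" using y_pos[of k] schr_orbit_nonzero[of s k, OF nonneg] by simp
  have z_sq: "(cmod (schr_orbit s k))\<^sup>2 = y k / d"
    using d_eq \<open>0 < d\<close> y_pos[of k] schr_orbit_nonzero[of s k, OF nonneg] by (simp add: field_simps)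
  have "ln (d / y (Suc k)) \<le> d / y (Suc k) - 1"
    using \<open>0 < d\<close> y_pos by (intro ln_le_minus_one) auto
  also have "\<dots> = - (Im (s k) / y (Suc k))"
    using y_pos[of "Suc k"] by (simp add: d_def field_simps)
  finally have "Im (s k) / y (Suc k) \<le> ln (y (Suc k)) - ln d"
    using \<open>0 < d\<close> y_pos[of "Suc k"] by (simp add: ln_div)
  moreover have "2 * ln (cmod (schr_orbit s k)) = ln ((cmod (schr_orbit s k))\<^sup>2)"
    using schr_orbit_nonzero[of s k, OF nonneg] by (simp add: ln_realpow)
  moreover have "ln ((cmod (schr_orbit s k))\<^sup>2) = ln (y k) - ln d"
    using z_sq \<open>0 < d\<close> y_pos[of k] by (simp add: ln_div)
  ultimately show ?thesis by linarith
qed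

lemma inverse_Im_schr_orbit_pair_ge:
  assumes nonneg: "\<And>k. 0 \<le> Im (s k)" and le: "\<And>k. Im (s k) \<le> l"
  shows "1 / (l + 1) \<le> 1 / Im (schr_orbit s k) + 1 / Im (schr_orbit s (Suc k))"
proof -
  define y where "y j = Im (schr_orbit s j)" for j
  have y_pos: "0 < y j" for j using Im_schr_orbit_pos[of s j, OF nonneg] by (simp add: y_def)
  have "0 \<le> l" using nonneg[of 0] le[of 0] by linarith
  have "y (Suc k) \<le> l + 1 \<or> y k \<le> l + 1"
  proof (rule disjCI)
    assume "\<not> y k \<le> l + 1"
    then have "1 / y k < 1" using \<open>0 \<le> l\<close> by simp
    then show "y (Suc k) \<le> l + 1"
      using Im_schr_orbit_Suc_le[of s k, OF nonneg] le[of k] by (simp add: y_def)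
  qed
  moreover have "1 / (l + 1) \<le> 1 / y j" if "y j \<le> l + 1" for j
    using that y_pos[of j] by (intro divide_left_mono) auto
  ultimately show ?thesis
    using y_pos[of k] y_pos[of "Suc k"] unfolding y_def
    by (smt (verit, best) divide_pos_pos)
qed

lemma sum_ge_pairs:
  fixes f :: "nat \<Rightarrow> real"
  assumes "\<And>k. 0 \<le> f k" and "\<And>j. c \<le> f (2 * j) + f (2 * j + 1)"
  shows "real (n div 2) * c \<le> (\<Sum>k<n. f k)"
proof -
  have "real m * c \<le> (\<Sum>k<2 * m. f k)" for m
  proof (induction m)
    case (Suc m)
    have "(\<Sum>k<2 * Suc m. f k) = (\<Sum>k<2 * m. f k) + (f (2 * m) + f (2 * m + 1))"
      by (simp add: mult_2)
    with Suc assms(2)[of m] show ?case by (simp add: algebra_simps)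
  qed simp
  also have "(\<Sum>k<2 * (n div 2). f k) \<le> (\<Sum>k<n. f k)"
    using assms(1) by (intro sum_mono2) auto
  finally show ?thesis .
qed

lemma sum_ln_cmod_schr_orbit_ge:
  assumes "0 < \<epsilon>" and Im_s: "\<And>k. \<epsilon> \<le> Im (s k) \<and> Im (s k) \<le> l"
  shows "real (n div 2) * (\<epsilon> / (l + 1)) - ln (l + 1 + 1 / \<epsilon>)
         \<le> 2 * (\<Sum>k<n. ln (cmod (schr_orbit s k)))"
proof -
  define y where "y j = Im (schr_orbit s j)" for j
  have nonneg: "\<And>k. 0 \<le> Im (s k)" using assms by (meson order.trans less_imp_le)
  have y_pos: "0 < y j" for j using Im_schr_orbit_pos[of s j, OF nonneg] by (simp add: y_def)
  have "real (n div 2) * (\<epsilon> / (l + 1)) \<le> (\<Sum>k<n. \<epsilon> / y (Suc k))"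
  proof (rule sum_ge_pairs)
    show "0 \<le> \<epsilon> / y (Suc k)" for k using \<open>0 < \<epsilon>\<close> y_pos[of "Suc k"] by simp
    show "\<epsilon> / (l + 1) \<le> \<epsilon> / y (Suc (2 * j)) + \<epsilon> / y (Suc (2 * j + 1))" for j
    proof -
      have "1 / (l + 1) \<le> 1 / y (Suc (2 * j)) + 1 / y (Suc (Suc (2 * j)))"
        unfolding y_def using Im_s by (intro inverse_Im_schr_orbit_pair_ge nonneg) auto
      then have "\<epsilon> * (1 / (l + 1)) \<le> \<epsilon> * (1 / y (Suc (2 * j)) + 1 / y (Suc (Suc (2 * j))))"
        using \<open>0 < \<epsilon>\<close> by (intro mult_left_mono) auto
      then show ?thesis by (simp add: distrib_left)
    qed
  qed
  also have "\<dots> \<le> (\<Sum>k<n. Im (s k) / y (Suc k))"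
    using Im_s y_pos by (intro sum_mono divide_right_mono) (auto simp: less_imp_le)
  finally have pairs: "real (n div 2) * (\<epsilon> / (l + 1)) \<le> (\<Sum>k<n. Im (s k) / y (Suc k))" .
  have "ln (y n) \<le> ln (l + 1 + 1 / \<epsilon>)"
    using Im_schr_orbit_le[of \<epsilon> s l n, OF \<open>0 < \<epsilon>\<close> Im_s] y_pos[of n] by (simp add: y_def)
  moreover have "(\<Sum>k<n. ln (y k) - ln (y (Suc k))) = ln (y 0) - ln (y n)"
    by (rule sum_lessThan_telescope')
  ultimately have "- ln (l + 1 + 1 / \<epsilon>) \<le> (\<Sum>k<n. ln (y k) - ln (y (Suc k)))"
    by (simp add: y_def)
  with pairs have "real (n div 2) * (\<epsilon> / (l + 1)) - ln (l + 1 + 1 / \<epsilon>)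
      \<le> (\<Sum>k<n. ln (y k) - ln (y (Suc k)) + Im (s k) / y (Suc k))"
    by (simp add: sum.distrib)
  also have "\<dots> \<le> (\<Sum>k<n. 2 * ln (cmod (schr_orbit s k)))"
    unfolding y_def by (intro sum_mono ln_cmod_schr_orbit_ge nonneg)
  finally show ?thesis by (simp add: sum_distrib_left)
qed

lemma schr_cocycle_iter_orbit:
  fixes v :: "real \<Rightarrow> complex" and a x :: real
  assumes "\<And>y. 0 \<le> Im (v y)"
  defines "z \<equiv> schr_orbit (\<lambda>k. v (x + real k * a))"
  shows "cocycle_iter a (schr_mat v) n x *v vector [\<i>, 1] = (\<Prod>k<n. z k) *s vector [z n, 1]"
proof (induction n)
  case 0
  then show ?case by (simp add: z_def matrix_vector_mul_lid)
next
  case (Suc n)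
  have "z n \<noteq> 0" unfolding z_def using assms(1) by (intro schr_orbit_nonzero)
  have "cocycle_iter a (schr_mat v) (Suc n) x *v vector [\<i>, 1]
        = schr_mat v (x + real n * a) *v ((\<Prod>k<n. z k) *s vector [z n, 1])"
    using Suc by (simp flip: matrix_vector_mul_assoc)
  also have "\<dots> = (\<Prod>k<Suc n. z k) *s vector [z (Suc n), 1]"
    using \<open>z n \<noteq> 0\<close>
    by (simp add: vec_eq_iff forall_2 schr_mat_def matrix_vector_mult_def sum_2 z_def field_simps)
  finally show ?case .
qed

lemma mat_norm_schr_cocycle_iter_ge:
  fixes v :: "real \<Rightarrow> complex" and a x :: real
  assumes "\<And>y. 0 \<le> Im (v y)"
  shows "(\<Prod>k<n. cmod (schr_orbit (\<lambda>k. v (x + real k * a)) k)) / 2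
         \<le> mat_norm (cocycle_iter a (schr_mat v) n x)"
proof -
  define M where "M = cocycle_iter a (schr_mat v) n x"
  define w :: "complex^2" where "w = vector [\<i>, 1]"
  have "norm w \<le> 2"
    using L2_set_le_sum[of UNIV "\<lambda>i. norm (w $ i)"] by (simp add: w_def norm_vec_def sum_2)
  have "(\<Prod>k<n. cmod (schr_orbit (\<lambda>k. v (x + real k * a)) k)) = norm ((M *v w) $ 2)"
    using schr_cocycle_iter_orbit[where n = n and x = x and a = a, OF assms]
    by (simp add: M_def w_def prod_norm)
  also have "\<dots> \<le> mat_norm M * norm w"
    using Finite_Cartesian_Product.norm_nth_le norm_matrix_vector_mult_le order_trans by blast
  also have "\<dots> \<le> mat_norm M * 2"
    using \<open>norm w \<le> 2\<close> mat_norm_nonneg by (rule mult_left_mono)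
  finally show ?thesis by (simp add: M_def)
qed

lemma ln_mat_norm_schr_cocycle_iter_ge:
  fixes v :: "real \<Rightarrow> complex" and a x :: real
  assumes "0 < \<epsilon>" and Im_v: "\<And>y. \<epsilon> \<le> Im (v y) \<and> Im (v y) \<le> l"
  defines "c \<equiv> \<epsilon> / (4 * (l + 1))"
  shows "0 < mat_norm (cocycle_iter a (schr_mat v) n x)"
    and "c * real n - (c + ln (l + 1 + 1 / \<epsilon>) / 2 + ln 2)
         \<le> ln (mat_norm (cocycle_iter a (schr_mat v) n x))"
proof -
  define z where "z = schr_orbit (\<lambda>k. v (x + real k * a))"
  define P where "P = (\<Prod>k<n. cmod (z k))"
  have nonneg: "\<And>y. 0 \<le> Im (v y)" using assms by (meson order.trans less_imp_le)
  have "0 \<le> l" using Im_v[of 0] \<open>0 < \<epsilon>\<close> by linarith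
  have z_nonzero: "z k \<noteq> 0" for k unfolding z_def using nonneg by (intro schr_orbit_nonzero)
  then have "0 < P" by (simp add: P_def prod_pos)
  have P_le: "P / 2 \<le> mat_norm (cocycle_iter a (schr_mat v) n x)"
    unfolding P_def z_def using nonneg by (rule mat_norm_schr_cocycle_iter_ge)
  with \<open>0 < P\<close> show pos: "0 < mat_norm (cocycle_iter a (schr_mat v) n x)" by linarith
  define h where "h = real (n div 2) * (\<epsilon> / (l + 1))"
  have "h - ln (l + 1 + 1 / \<epsilon>) \<le> 2 * ln P"
    using sum_ln_cmod_schr_orbit_ge[of \<epsilon> "\<lambda>k. v (x + real k * a)" l n] \<open>0 < \<epsilon>\<close> Im_v z_nonzero
    by (simp add: h_def P_def z_def ln_prod)
  moreover have "c * real n - c \<le> h / 2"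
  proof -
    have "real n - 1 \<le> 2 * real (n div 2)" by linarith
    then have "(real n - 1) * c \<le> (2 * real (n div 2)) * c"
      using \<open>0 < \<epsilon>\<close> \<open>0 \<le> l\<close> by (intro mult_right_mono) (auto simp: c_def)
    moreover have "(2 * real (n div 2)) * c = h / 2"
      using \<open>0 \<le> l\<close> by (simp add: h_def c_def field_simps)
    ultimately show ?thesis by (simp add: algebra_simps)
  qed
  moreover have "ln P - ln 2 \<le> ln (mat_norm (cocycle_iter a (schr_mat v) n x))"
  proof -
    have "ln (P / 2) \<le> ln (mat_norm (cocycle_iter a (schr_mat v) n x))"
      using P_le \<open>0 < P\<close> by (subst ln_le_cancel_iff) auto
    then show ?thesis using \<open>0 < P\<close> by (simp add: ln_div)
  qed
  ultimately show "c * real n - (c + ln (l + 1 + 1 / \<epsilon>) / 2 + ln 2)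
      \<le> ln (mat_norm (cocycle_iter a (schr_mat v) n x))"
    by linarith
qed

theorem lemma5p6:
  shows "\<forall>l::real. l > 0 \<longrightarrow> (\<exists>C>0. \<forall>(\<epsilon>::real) (\<alpha>::real) (v::real \<Rightarrow> complex).
     0 < \<epsilon> \<and> \<epsilon> \<le> l \<and> \<alpha> \<notin> \<rat> \<and> continuous_on UNIV v \<and> (\<forall>x. v (x + 1) = v x) \<and>
     (\<forall>x. \<bar>Re (v x)\<bar> \<le> l \<and> \<epsilon> \<le> Im (v x) \<and> Im (v x) \<le> l)
     \<longrightarrow> lyap_exp \<alpha> (schr_mat v) \<ge> C * \<epsilon>)"
proof (intro allI impI)
  fix l :: real
  assume "l > 0"
  show "\<exists>C>0. \<forall>(\<epsilon>::real) (\<alpha>::real) (v::real \<Rightarrow> complex).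
     0 < \<epsilon> \<and> \<epsilon> \<le> l \<and> \<alpha> \<notin> \<rat> \<and> continuous_on UNIV v \<and> (\<forall>x. v (x + 1) = v x) \<and>
     (\<forall>x. \<bar>Re (v x)\<bar> \<le> l \<and> \<epsilon> \<le> Im (v x) \<and> Im (v x) \<le> l)
     \<longrightarrow> lyap_exp \<alpha> (schr_mat v) \<ge> C * \<epsilon>"
  proof (intro exI[of _ "1 / (4 * (l + 1))"] conjI allI impI)
    show "0 < 1 / (4 * (l + 1))" using \<open>l > 0\<close> by simp
    fix \<epsilon> \<alpha> :: real and v :: "real \<Rightarrow> complex"
    assume "0 < \<epsilon> \<and> \<epsilon> \<le> l \<and> \<alpha> \<notin> \<rat> \<and> continuous_on UNIV v \<and> (\<forall>x. v (x + 1) = v x) \<and>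
      (\<forall>x. \<bar>Re (v x)\<bar> \<le> l \<and> \<epsilon> \<le> Im (v x) \<and> Im (v x) \<le> l)"
    then have "0 < \<epsilon>" and cont: "continuous_on UNIV v" and per: "\<And>x. v (x + 1) = v x"
      and Im_v: "\<And>x. \<epsilon> \<le> Im (v x) \<and> Im (v x) \<le> l"
      by auto
    have "\<epsilon> / (4 * (l + 1)) \<le> lyap_exp \<alpha> (schr_mat v)"
    proof (rule lyap_exp_ge)
      show "continuous_on UNIV (schr_mat v)" using cont by (rule continuous_on_schr_mat)
      show "schr_mat v (x + 1) = schr_mat v x" for x using per by (rule schr_mat_periodic)
      show "0 < mat_norm (cocycle_iter \<alpha> (schr_mat v) n x)"
        and "\<epsilon> / (4 * (l + 1)) * real n - (\<epsilon> / (4 * (l + 1)) + ln (l + 1 + 1 / \<epsilon>) / 2 + ln 2)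
             \<le> ln (mat_norm (cocycle_iter \<alpha> (schr_mat v) n x))" for n x
        using ln_mat_norm_schr_cocycle_iter_ge[OF \<open>0 < \<epsilon>\<close> Im_v] by auto
    qed
    then show "1 / (4 * (l + 1)) * \<epsilon> \<le> lyap_exp \<alpha> (schr_mat v)" by simp
  qed
qed

end
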